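(* Let $(X,\rho)$ be a symmetric rack and let $S=\{S_x \mid x\in X\}$ be a family of sets. Suppose that for all $x,y\in X$ we are given maps $\alpha_{x,y}: S_x\times S_y\to S_{x*y}$ and $\beta_x: S_x\to S_{\rho(x)}$; for $t\in S_y$ write $\alpha_{x,y}(t):S_x\to S_{x*y}$ for the map $s\mapsto \alpha_{x,y}(s,t)$. Let $X\times S=\{(x,s)\mid x\in X,\ s\in S_x\}$ with the binary operation $$(x,s)*(y,t)=\big(x*y,\ \alpha_{x,y}(s,t)\big)$$ and the map $\rho_{\alpha,\beta}:X\times S\to X\times S$, $\rho_{\alpha,\beta}(x,s)=\big(\rho(x),\beta_x(s)\big)$. Then $X\times S$ with this operation is a symmetric rack with good involution $\rho_{\alpha,\beta}$ if and only if for all $x,y,z\in X$, $s\in S_x$, $t\in S_y$, $w\in S_z$: (1) $\alpha_{x,y}(t):S_x\to S_{x*y}$ is a bijection; (2) $\alpha_{x*y,z}\big(\alpha_{x,y}(s,t),w\big)=\alpha_{x*z,y*z}\big(\alpha_{x,z}(s,w),\alpha_{y,z}(t,w)\big)$; (3) $\alpha_{\rho(x),y}\big(\beta_x(s),t\big)=\beta_{x*y}\big(\alpha_{x,y}(s,t)\big)$; (4) $\beta_{\rho(x)}\beta_x(s)=s$; (5) $\alpha_{x,\rho(y)}(\beta_y(t))(s)=\big(\alpha_{x*^{-1}y,y}(t)\big)^{-1}(s)$. Furthermore, if $(X,\rho)$ is a symmetric quandle, then $X\times S$ is a symmetric quandle (with this operation and involution) if and only if (1)–(5) hold and additionally (6)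 $\alpha_{x,x}(s,s)=s$ for all $x\in X$, $s\in S_x$.
   Context: A rack is a set $X$ with a binary operation $*$ such that for every $y\in X$ the map $x\mapsto x*y$ is a bijection of $X$ (its inverse is written $x\mapsto x*^{-1}y$) and $(x*y)*z=(x*z)*(y*z)$ for all $x,y,z$. A quandle is a rack with $x*x=x$ for all $x$. A good involution of a rack (quandle) $X$ is a map $\rho:X\to X$ with $\rho^2=\mathrm{id}_X$, $\rho(x*y)=\rho(x)*y$ and $x*\rho(y)=x*^{-1}y$ for all $x,y\in X$; the pair $(X,\rho)$ is then called a symmetric rack (symmetric quandle). *)

theory Defs
  imports Main
begin

definition rack :: "'a set \<Rightarrow> ('a \<Rightarrow> 'a \<Rightarrow> 'a) \<Rightarrow> bool" where
  "rack X m \<longleftrightarrow>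
     (\<forall>x\<in>X. \<forall>y\<in>X. m x y \<in> X) \<and>
     (\<forall>y\<in>X. bij_betw (\<lambda>x. m x y) X X) \<and>
     (\<forall>x\<in>X. \<forall>y\<in>X. \<forall>z\<in>X. m (m x y) z = m (m x z) (m y z))"

definition rinv :: "'a set \<Rightarrow> ('a \<Rightarrow> 'a \<Rightarrow> 'a) \<Rightarrow> 'a \<Rightarrow> 'a \<Rightarrow> 'a" where
  "rinv X m x y = the_inv_into X (\<lambda>z. m z y) x"

definition quandle :: "'a set \<Rightarrow> ('a \<Rightarrow> 'a \<Rightarrow> 'a) \<Rightarrow> bool" where
  "quandle X m \<longleftrightarrow> rack X m \<and> (\<forall>x\<in>X. m x x = x)"

definition good_involution :: "'a set \<Rightarrow> ('a \<Rightarrow> 'a \<Rightarrow> 'a) \<Rightarrow> ('a \<Rightarrow> 'a) \<Rightarrow> bool" where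
  "good_involution X m \<rho> \<longleftrightarrow>
     (\<forall>x\<in>X. \<rho> x \<in> X \<and> \<rho> (\<rho> x) = x) \<and>
     (\<forall>x\<in>X. \<forall>y\<in>X. \<rho> (m x y) = m (\<rho> x) y \<and> m x (\<rho> y) = rinv X m x y)"

definition symmetric_rack :: "'a set \<Rightarrow> ('a \<Rightarrow> 'a \<Rightarrow> 'a) \<Rightarrow> ('a \<Rightarrow> 'a) \<Rightarrow> bool" where
  "symmetric_rack X m \<rho> \<longleftrightarrow> rack X m \<and> good_involution X m \<rho>"

definition symmetric_quandle :: "'a set \<Rightarrow> ('a \<Rightarrow> 'a \<Rightarrow> 'a) \<Rightarrow> ('a \<Rightarrow> 'a) \<Rightarrow> bool" where
  "symmetric_quandle X m \<rho> \<longleftrightarrow> quandle X m \<and> good_involution X m \<rho>"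

definition ext_op :: "('a \<Rightarrow> 'a \<Rightarrow> 'a) \<Rightarrow> ('a \<Rightarrow> 'a \<Rightarrow> 'b \<Rightarrow> 'b \<Rightarrow> 'b)
    \<Rightarrow> 'a \<times> 'b \<Rightarrow> 'a \<times> 'b \<Rightarrow> 'a \<times> 'b" where
  "ext_op m \<alpha> p q = (m (fst p) (fst q), \<alpha> (fst p) (fst q) (snd p) (snd q))"

definition ext_inv :: "('a \<Rightarrow> 'a) \<Rightarrow> ('a \<Rightarrow> 'b \<Rightarrow> 'b) \<Rightarrow> 'a \<times> 'b \<Rightarrow> 'a \<times> 'b" where
  "ext_inv \<rho> \<beta> p = (\<rho> (fst p), \<beta> (fst p) (snd p))"

definition ext_conditions :: "'a set \<Rightarrow> ('a \<Rightarrow> 'a \<Rightarrow> 'a) \<Rightarrow> ('a \<Rightarrow> 'a) \<Rightarrow> ('a \<Rightarrow> 'b set)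
    \<Rightarrow> ('a \<Rightarrow> 'a \<Rightarrow> 'b \<Rightarrow> 'b \<Rightarrow> 'b) \<Rightarrow> ('a \<Rightarrow> 'b \<Rightarrow> 'b) \<Rightarrow> bool" where
  "ext_conditions X m \<rho> S \<alpha> \<beta> \<longleftrightarrow>
     (\<forall>x\<in>X. \<forall>y\<in>X. \<forall>t\<in>S y. bij_betw (\<lambda>s. \<alpha> x y s t) (S x) (S (m x y))) \<and>
     (\<forall>x\<in>X. \<forall>y\<in>X. \<forall>z\<in>X. \<forall>s\<in>S x. \<forall>t\<in>S y. \<forall>w\<in>S z.
        \<alpha> (m x y) z (\<alpha> x y s t) w = \<alpha> (m x z) (m y z) (\<alpha> x z s w) (\<alpha> y z t w)) \<and>
     (\<forall>x\<in>X. \<forall>y\<in>X. \<forall>s\<in>S x. \<forall>t\<in>S y. \<alpha> (\<rho> x) y (\<beta> x s) t = \<beta> (m x y) (\<alpha> x y s t)) \<and>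
     (\<forall>x\<in>X. \<forall>s\<in>S x. \<beta> (\<rho> x) (\<beta> x s) = s) \<and>
     (\<forall>x\<in>X. \<forall>y\<in>X. \<forall>s\<in>S x. \<forall>t\<in>S y.
        \<alpha> x (\<rho> y) s (\<beta> y t) = the_inv_into (S (rinv X m x y)) (\<lambda>u. \<alpha> (rinv X m x y) y u t) s)"

end

theory Submission
  imports Defs
begin

text \<open>
  Projection to the first coordinate is a homomorphism onto the symmetric rack X, so each
  axiom of X \<times> S splits into a base component, which holds in X, and a fibre component.
  For right distributivity, for \<rho>_{\<alpha>,\<beta>} being an involution, for \<rho>_{\<alpha>,\<beta>} commuting with
  right translations and for idempotence, the fibre components are exactly (2), (4), (3)
  and (6). Right translation by (y, t) is the skew product of right translation by y with
  the fibre maps \<alpha>_{x,y}(t); it is bijective iff all of these are, which is (1), and its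
  inverse is then computed fibrewise, so that the fibre component of
  x * \<rho>(y) = x *^{-1} y is (5).
\<close>

lemma bij_betw_Sigma_iff:
  assumes f: "bij_betw f X Y"
    and g_maps: "\<And>x s. x \<in> X \<Longrightarrow> s \<in> S x \<Longrightarrow> g x s \<in> T (f x)"
  shows "bij_betw (\<lambda>p. (f (fst p), g (fst p) (snd p))) (Sigma X S) (Sigma Y T)
     \<longleftrightarrow> (\<forall>x\<in>X. bij_betw (g x) (S x) (T (f x)))"
    (is "bij_betw ?h _ _ \<longleftrightarrow> _")
proof
  assume h: "bij_betw ?h (Sigma X S) (Sigma Y T)"
  show "\<forall>x\<in>X. bij_betw (g x) (S x) (T (f x))"
  proof
    fix x assume x: "x \<in> X"
    have "inj_on (g x) (S x)"
      using h x by (auto simp: bij_betw_def inj_on_def)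
    moreover have "T (f x) \<subseteq> g x ` S x"
    proof
      fix u assume "u \<in> T (f x)"
      then have "(f x, u) \<in> ?h ` Sigma X S"
        using h f x by (auto simp: bij_betw_def)
      then obtain x' s where "x' \<in> X" "s \<in> S x'" "f x' = f x" "g x' s = u"
        by auto
      moreover have "x' = x"
        using f x \<open>x' \<in> X\<close> \<open>f x' = f x\<close> by (auto simp: bij_betw_def inj_on_def)
      ultimately show "u \<in> g x ` S x" by auto
    qed
    ultimately show "bij_betw (g x) (S x) (T (f x))"
      using g_maps x by (auto simp: bij_betw_def)
  qed
next
  assume g: "\<forall>x\<in>X. bij_betw (g x) (S x) (T (f x))"
  have "inj_on ?h (Sigma X S)"
    using f g by (auto simp: bij_betw_def inj_on_def)
  moreover have "?h ` Sigma X S = Sigma Y T"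
  proof
    show "?h ` Sigma X S \<subseteq> Sigma Y T"
      using f g_maps by (auto simp: bij_betw_def)
    show "Sigma Y T \<subseteq> ?h ` Sigma X S"
    proof (clarify)
      fix y u assume "y \<in> Y" "u \<in> T y"
      then obtain x where "x \<in> X" "y = f x"
        using f by (auto simp: bij_betw_def)
      moreover obtain s where "s \<in> S x" "u = g x s"
        using g \<open>x \<in> X\<close> \<open>u \<in> T y\<close> \<open>y = f x\<close> by (auto simp: bij_betw_def)
      ultimately show "(y, u) \<in> ?h ` Sigma X S"
        by (auto intro!: image_eqI[of _ _ "(x, s)"])
    qed
  qed
  ultimately show "bij_betw ?h (Sigma X S) (Sigma Y T)"
    by (simp add: bij_betw_def)
qed

lemma the_inv_into_Sigma:
  assumes f: "bij_betw f X Y"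
    and g: "\<forall>x\<in>X. bij_betw (g x) (S x) (T (f x))"
    and "y \<in> Y" "u \<in> T y"
  shows "the_inv_into (Sigma X S) (\<lambda>p. (f (fst p), g (fst p) (snd p))) (y, u)
       = (the_inv_into X f y, the_inv_into (S (the_inv_into X f y)) (g (the_inv_into X f y)) u)"
    (is "the_inv_into _ ?h _ = _")
proof -
  define x where "x = the_inv_into X f y"
  have x: "x \<in> X" "f x = y"
    using f \<open>y \<in> Y\<close> unfolding x_def
    by (auto intro: bij_betw_apply[OF bij_betw_the_inv_into] f_the_inv_into_f_bij_betw)
  then have gx: "bij_betw (g x) (S x) (T y)"
    using g by auto
  have g_maps: "g x' s \<in> T (f x')" if "x' \<in> X" "s \<in> S x'" for x' s
    using g that by (auto simp: bij_betw_def)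
  show ?thesis
    unfolding x_def[symmetric]
  proof (rule the_inv_into_f_eq)
    show "inj_on ?h (Sigma X S)"
      using bij_betw_Sigma_iff[OF f, of S g T] g g_maps by (simp add: bij_betw_def)
    show "?h (x, the_inv_into (S x) (g x) u) = (y, u)"
      using x gx \<open>u \<in> T y\<close> by (simp add: f_the_inv_into_f_bij_betw)
    show "(x, the_inv_into (S x) (g x) u) \<in> Sigma X S"
      using x gx \<open>u \<in> T y\<close> by (auto intro: bij_betw_apply[OF bij_betw_the_inv_into])
  qed
qed

lemma ext_op_right_translation:
  "(\<lambda>p. ext_op m \<alpha> p (y, t)) = (\<lambda>p. (m (fst p) y, \<alpha> (fst p) y (snd p) t))"
  by (simp add: ext_op_def)

lemma rack_ext_op_iff:
  assumes rack: "rack X m"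
    and alpha_maps: "\<And>x y s t. x \<in> X \<Longrightarrow> y \<in> X \<Longrightarrow> s \<in> S x \<Longrightarrow> t \<in> S y \<Longrightarrow> \<alpha> x y s t \<in> S (m x y)"
  shows "rack (Sigma X S) (ext_op m \<alpha>) \<longleftrightarrow>
     (\<forall>x\<in>X. \<forall>y\<in>X. \<forall>t\<in>S y. bij_betw (\<lambda>s. \<alpha> x y s t) (S x) (S (m x y))) \<and>
     (\<forall>x\<in>X. \<forall>y\<in>X. \<forall>z\<in>X. \<forall>s\<in>S x. \<forall>t\<in>S y. \<forall>w\<in>S z.
        \<alpha> (m x y) z (\<alpha> x y s t) w = \<alpha> (m x z) (m y z) (\<alpha> x z s w) (\<alpha> y z t w))"
proof -
  have closed: "\<forall>x\<in>X. \<forall>y\<in>X. m x y \<in> X"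
    and bij: "\<forall>y\<in>X. bij_betw (\<lambda>x. m x y) X X"
    and distrib: "\<forall>x\<in>X. \<forall>y\<in>X. \<forall>z\<in>X. m (m x y) z = m (m x z) (m y z)"
    using rack unfolding rack_def by blast+
  have "\<forall>p\<in>Sigma X S. \<forall>q\<in>Sigma X S. ext_op m \<alpha> p q \<in> Sigma X S"
    using closed alpha_maps by (simp add: ext_op_def)
  moreover have "bij_betw (\<lambda>p. ext_op m \<alpha> p (y, t)) (Sigma X S) (Sigma X S)
      \<longleftrightarrow> (\<forall>x\<in>X. bij_betw (\<lambda>s. \<alpha> x y s t) (S x) (S (m x y)))"
    if "y \<in> X" "t \<in> S y" for y t
    unfolding ext_op_right_translation
    using bij_betw_Sigma_iff[of "\<lambda>x. m x y" X X S "\<lambda>x s. \<alpha> x y s t" S] bij alpha_maps that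
    by simp
  then have "(\<forall>q\<in>Sigma X S. bij_betw (\<lambda>p. ext_op m \<alpha> p q) (Sigma X S) (Sigma X S))
      \<longleftrightarrow> (\<forall>x\<in>X. \<forall>y\<in>X. \<forall>t\<in>S y. bij_betw (\<lambda>s. \<alpha> x y s t) (S x) (S (m x y)))"
    by simp blast
  moreover have "ext_op m \<alpha> (ext_op m \<alpha> (x, s) (y, t)) (z, w)
        = ext_op m \<alpha> (ext_op m \<alpha> (x, s) (z, w)) (ext_op m \<alpha> (y, t) (z, w))
      \<longleftrightarrow> \<alpha> (m x y) z (\<alpha> x y s t) w = \<alpha> (m x z) (m y z) (\<alpha> x z s w) (\<alpha> y z t w)"
    if "x \<in> X" "y \<in> X" "z \<in> X" for x y z s t w
    using distrib that by (simp add: ext_op_def)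
  then have "(\<forall>p\<in>Sigma X S. \<forall>q\<in>Sigma X S. \<forall>r\<in>Sigma X S.
        ext_op m \<alpha> (ext_op m \<alpha> p q) r = ext_op m \<alpha> (ext_op m \<alpha> p r) (ext_op m \<alpha> q r))
      \<longleftrightarrow> (\<forall>x\<in>X. \<forall>y\<in>X. \<forall>z\<in>X. \<forall>s\<in>S x. \<forall>t\<in>S y. \<forall>w\<in>S z.
        \<alpha> (m x y) z (\<alpha> x y s t) w = \<alpha> (m x z) (m y z) (\<alpha> x z s w) (\<alpha> y z t w))"
    by simp blast
  ultimately show ?thesis
    unfolding rack_def by blast
qed

lemma rinv_ext_op:
  assumes rack: "rack X m"
    and fibre_bij: "\<forall>x\<in>X. \<forall>y\<in>X. \<forall>t\<in>S y. bij_betw (\<lambda>s. \<alpha> x y s t) (S x) (S (m x y))"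
    and "x \<in> X" "y \<in> X" "s \<in> S x" "t \<in> S y"
  shows "rinv (Sigma X S) (ext_op m \<alpha>) (x, s) (y, t)
       = (rinv X m x y, the_inv_into (S (rinv X m x y)) (\<lambda>u. \<alpha> (rinv X m x y) y u t) s)"
  unfolding rinv_def ext_op_right_translation
  using the_inv_into_Sigma[of "\<lambda>z. m z y" X X "\<lambda>z u. \<alpha> z y u t" S S x s] assms
  by (simp add: rack_def)

lemma good_involution_ext_iff:
  assumes rack: "rack X m" and good: "good_involution X m \<rho>"
    and alpha_maps: "\<And>x y s t. x \<in> X \<Longrightarrow> y \<in> X \<Longrightarrow> s \<in> S x \<Longrightarrow> t \<in> S y \<Longrightarrow> \<alpha> x y s t \<in> S (m x y)"
    and beta_maps: "\<And>x s. x \<in> X \<Longrightarrow> s \<in> S x \<Longrightarrow> \<beta> x s \<in> S (\<rho> x)"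
    and fibre_bij: "\<forall>x\<in>X. \<forall>y\<in>X. \<forall>t\<in>S y. bij_betw (\<lambda>s. \<alpha> x y s t) (S x) (S (m x y))"
  shows "good_involution (Sigma X S) (ext_op m \<alpha>) (ext_inv \<rho> \<beta>) \<longleftrightarrow>
     (\<forall>x\<in>X. \<forall>y\<in>X. \<forall>s\<in>S x. \<forall>t\<in>S y. \<alpha> (\<rho> x) y (\<beta> x s) t = \<beta> (m x y) (\<alpha> x y s t)) \<and>
     (\<forall>x\<in>X. \<forall>s\<in>S x. \<beta> (\<rho> x) (\<beta> x s) = s) \<and>
     (\<forall>x\<in>X. \<forall>y\<in>X. \<forall>s\<in>S x. \<forall>t\<in>S y.
        \<alpha> x (\<rho> y) s (\<beta> y t) = the_inv_into (S (rinv X m x y)) (\<lambda>u. \<alpha> (rinv X m x y) y u t) s)"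
proof -
  have \<rho>_closed: "\<forall>x\<in>X. \<rho> x \<in> X" and \<rho>_involutive: "\<forall>x\<in>X. \<rho> (\<rho> x) = x"
    and \<rho>_right: "\<forall>x\<in>X. \<forall>y\<in>X. \<rho> (m x y) = m (\<rho> x) y"
    and \<rho>_left: "\<forall>x\<in>X. \<forall>y\<in>X. m x (\<rho> y) = rinv X m x y"
    using good unfolding good_involution_def by blast+
  have "\<forall>p\<in>Sigma X S. ext_inv \<rho> \<beta> p \<in> Sigma X S"
    using \<rho>_closed beta_maps by (simp add: ext_inv_def)
  moreover have "ext_inv \<rho> \<beta> (ext_inv \<rho> \<beta> (x, s)) = (x, s) \<longleftrightarrow> \<beta> (\<rho> x) (\<beta> x s) = s"
    if "x \<in> X" for x s
    using \<rho>_involutive that by (simp add: ext_inv_def)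
  moreover have "ext_inv \<rho> \<beta> (ext_op m \<alpha> (x, s) (y, t)) = ext_op m \<alpha> (ext_inv \<rho> \<beta> (x, s)) (y, t)
      \<longleftrightarrow> \<alpha> (\<rho> x) y (\<beta> x s) t = \<beta> (m x y) (\<alpha> x y s t)"
    if "x \<in> X" "y \<in> X" for x y s t
    using \<rho>_right that by (auto simp: ext_inv_def ext_op_def)
  moreover have "ext_op m \<alpha> (x, s) (ext_inv \<rho> \<beta> (y, t)) = rinv (Sigma X S) (ext_op m \<alpha>) (x, s) (y, t)
      \<longleftrightarrow> \<alpha> x (\<rho> y) s (\<beta> y t) = the_inv_into (S (rinv X m x y)) (\<lambda>u. \<alpha> (rinv X m x y) y u t) s"
    if "x \<in> X" "y \<in> X" "s \<in> S x" "t \<in> S y" for x y s t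
    using \<rho>_left rinv_ext_op[OF rack fibre_bij] that by (simp add: ext_inv_def ext_op_def)
  ultimately show ?thesis
    unfolding good_involution_def split_paired_Ball_Sigma by (auto simp del: split_paired_Ball_Sigma)
qed

lemma idempotent_ext_op_iff:
  assumes "\<forall>x\<in>X. m x x = x"
  shows "(\<forall>p\<in>Sigma X S. ext_op m \<alpha> p p = p) \<longleftrightarrow> (\<forall>x\<in>X. \<forall>s\<in>S x. \<alpha> x x s s = s)"
  using assms by (simp add: ext_op_def)

theorem proposition3p1:
  fixes X :: "'a set" and m :: "'a \<Rightarrow> 'a \<Rightarrow> 'a" and \<rho> :: "'a \<Rightarrow> 'a"
    and S :: "'a \<Rightarrow> 'b set" and \<alpha> :: "'a \<Rightarrow> 'a \<Rightarrow> 'b \<Rightarrow> 'b \<Rightarrow> 'b" and \<beta> :: "'a \<Rightarrow> 'b \<Rightarrow> 'b"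
  assumes sym: "symmetric_rack X m \<rho>"
    and alpha_maps: "\<And>x y s t. x \<in> X \<Longrightarrow> y \<in> X \<Longrightarrow> s \<in> S x \<Longrightarrow> t \<in> S y \<Longrightarrow> \<alpha> x y s t \<in> S (m x y)"
    and beta_maps: "\<And>x s. x \<in> X \<Longrightarrow> s \<in> S x \<Longrightarrow> \<beta> x s \<in> S (\<rho> x)"
  shows "(symmetric_rack (Sigma X S) (ext_op m \<alpha>) (ext_inv \<rho> \<beta>) \<longleftrightarrow> ext_conditions X m \<rho> S \<alpha> \<beta>)
       \<and> (symmetric_quandle X m \<rho> \<longrightarrow>
            (symmetric_quandle (Sigma X S) (ext_op m \<alpha>) (ext_inv \<rho> \<beta>) \<longleftrightarrow>
               ext_conditions X m \<rho> S \<alpha> \<beta> \<and> (\<forall>x\<in>X. \<forall>s\<in>S x. \<alpha> x x s s = s)))"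
proof -
  have rack: "rack X m" and good: "good_involution X m \<rho>"
    using sym by (simp_all add: symmetric_rack_def)
  note rack_iff = rack_ext_op_iff[of X m S \<alpha>, OF rack alpha_maps]
    and good_iff = good_involution_ext_iff[of X m \<rho> S \<alpha> \<beta>, OF rack good alpha_maps beta_maps]
  have main: "symmetric_rack (Sigma X S) (ext_op m \<alpha>) (ext_inv \<rho> \<beta>) \<longleftrightarrow> ext_conditions X m \<rho> S \<alpha> \<beta>"
    unfolding symmetric_rack_def ext_conditions_def using rack_iff good_iff by blast
  moreover have "symmetric_quandle (Sigma X S) (ext_op m \<alpha>) (ext_inv \<rho> \<beta>) \<longleftrightarrow>
      ext_conditions X m \<rho> S \<alpha> \<beta> \<and> (\<forall>x\<in>X. \<forall>s\<in>S x. \<alpha> x x s s = s)"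
    if "symmetric_quandle X m \<rho>"
    using main idempotent_ext_op_iff[of X m S \<alpha>] that
    unfolding symmetric_quandle_def symmetric_rack_def quandle_def by blast
  ultimately show ?thesis
    by blast
qed

end
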